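(* Let $\mathcal{F}\subseteq\mathcal{P}(\omega)$ be a free filter and let $D,E\subseteq(-1,1)^\omega$ be countable sets. Then there exists a homeomorphism $h\colon Q\to Q$ of $Q=[-1,1]^\omega$ such that $h[C_\mathcal{F}]=C_\mathcal{F}$, $h[(-1,1)^\omega]=(-1,1)^\omega$, and for all $d\in D$, $e\in E$ and $n\in\omega$, $h(d)(n)\ne e(n)$.
   Context: A filter on $\omega$ is free if it contains all cofinite sets. $Q=[-1,1]^\omega$ has the product topology and $Q^\circ=(-1,1)^\omega$. $K_\mathcal{F}=\{f\in Q:\forall m\in\omega\ \{n\in\omega:|f(n)|<2^{-m}\}\in\mathcal{F}\}$ and $C_\mathcal{F}=K_\mathcal{F}\cap Q^\circ$. *)

theory Defs
  imports "HOL-Analysis.Analysis"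
begin

definition is_filter :: "nat set set \<Rightarrow> bool" where
  "is_filter F \<longleftrightarrow> UNIV \<in> F \<and> {} \<notin> F \<and>
     (\<forall>A B. A \<in> F \<and> B \<in> F \<longrightarrow> A \<inter> B \<in> F) \<and>
     (\<forall>A B. A \<in> F \<and> A \<subseteq> B \<longrightarrow> B \<in> F)"

definition free_filter :: "nat set set \<Rightarrow> bool" where
  "free_filter F \<longleftrightarrow> is_filter F \<and> (\<forall>A. finite (UNIV - A) \<longrightarrow> A \<in> F)"

definition Qset :: "(nat \<Rightarrow> real) set" where
  "Qset = {f. \<forall>n. f n \<in> {-1..1}}"

definition Qtop :: "(nat \<Rightarrow> real) topology" where
  "Qtop = product_topology (\<lambda>_. subtopology euclideanreal {-1..1}) UNIV"

definition Qint :: "(nat \<Rightarrow> real) set" where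
  "Qint = {f. \<forall>n. f n \<in> {-1<..<1}}"

definition K_F :: "nat set set \<Rightarrow> (nat \<Rightarrow> real) set" where
  "K_F F = {f \<in> Qset. \<forall>m::nat. {n. \<bar>f n\<bar> < inverse (2 ^ m)} \<in> F}"

definition C_F :: "nat set set \<Rightarrow> (nat \<Rightarrow> real) set" where
  "C_F F = K_F F \<inter> Qint"

lemma topspace_Qtop: "topspace Qtop = Qset"
  by (auto simp: Qtop_def Qset_def PiE_def extensional_def)

end

theory Submission
  imports Defs
begin

text \<open>Each coordinate is moved by its own homeomorphism \<open>t \<mapsto> t + a\<^sub>n (1 - t\<^sup>2)\<close> of
  \<open>[-1,1]\<close>, which fixes the endpoints and preserves \<open>(-1,1)\<close>. Taking \<open>0 < a\<^sub>n \<le> 2\<^sup>-\<^sup>n\<close>,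
  the \<open>n\<close>-th coordinate moves by at most \<open>2\<^sup>-\<^sup>n\<close>; as the filter is free, such a
  perturbation does not affect membership in \<open>K\<^sub>F\<close>. For \<open>|t| < 1\<close> the equation
  \<open>t + a (1 - t\<^sup>2) = s\<close> determines \<open>a\<close>, so only countably many values of \<open>a\<^sub>n\<close>
  send \<open>d(n)\<close> to \<open>e(n)\<close> for some \<open>d \<in> D\<close>, \<open>e \<in> E\<close>; choose \<open>a\<^sub>n\<close> outside them.\<close>

definition tilt :: "real \<Rightarrow> real \<Rightarrow> real" where
  "tilt a t = t + a * (1 - t\<^sup>2)"

lemma continuous_on_tilt: "continuous_on S (tilt a)"
  unfolding tilt_def by (intro continuous_intros)

lemma tilt_pm1 [simp]: "tilt a 1 = 1" "tilt a (-1) = -1"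
  by (auto simp: tilt_def)

lemma strict_mono_on_tilt:
  assumes "\<bar>a\<bar> \<le> 1/2"
  shows "strict_mono_on {-1..1} (tilt a)"
proof (rule strict_mono_onI)
  fix x y :: real assume "x \<in> {-1..1}" "y \<in> {-1..1}" "x < y"
  have "\<bar>x + y\<bar> < 2"
    using \<open>x \<in> {-1..1}\<close> \<open>y \<in> {-1..1}\<close> \<open>x < y\<close> by auto
  have "\<bar>a * (x + y)\<bar> \<le> 1/2 * \<bar>x + y\<bar>"
    unfolding abs_mult using assms by (intro mult_right_mono) auto
  also have "\<dots> < 1" using \<open>\<bar>x + y\<bar> < 2\<close> by simp
  finally have "0 < (y - x) * (1 - a * (x + y))"
    using \<open>x < y\<close> by (simp add: abs_less_iff)
  also have "\<dots> = tilt a y - tilt a x"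
    by (simp add: tilt_def power2_eq_square algebra_simps)
  finally show "tilt a x < tilt a y" by simp
qed

lemma tilt_image_closed_interval:
  assumes "\<bar>a\<bar> \<le> 1/2"
  shows "tilt a ` {-1..1} = {-1..1}"
proof
  show "tilt a ` {-1..1} \<subseteq> {-1..1}"
    using strict_mono_onD[OF strict_mono_on_tilt[OF assms], of "-1"]
      strict_mono_onD[OF strict_mono_on_tilt[OF assms], of _ 1]
    by (force simp: less_eq_real_def)
  show "{-1..1} \<subseteq> tilt a ` {-1..1}"
    using IVT'[of "tilt a" "-1" _ 1] continuous_on_tilt by fastforce
qed

lemma tilt_image_open_interval:
  assumes "\<bar>a\<bar> \<le> 1/2"
  shows "tilt a ` {-1<..<1} = {-1<..<1}"
proof -
  have "{-1<..<1} = {-1..1::real} - {-1, 1}" by auto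
  moreover have "tilt a ` ({-1..1} - {-1, 1}) = tilt a ` {-1..1} - tilt a ` {-1, 1}"
    using strict_mono_on_imp_inj_on[OF strict_mono_on_tilt[OF assms]]
    by (intro inj_on_image_set_diff) auto
  ultimately show ?thesis
    using tilt_image_closed_interval[OF assms] by simp
qed

lemma tilt_dist_le:
  assumes "t \<in> {-1..1}"
  shows "\<bar>tilt a t - t\<bar> \<le> \<bar>a\<bar>"
proof -
  have "0 \<le> 1 - t\<^sup>2" "1 - t\<^sup>2 \<le> 1" using assms abs_square_le_1[of t] by auto
  then show ?thesis by (simp add: tilt_def abs_mult mult_left_le)
qed

lemma tilt_eq_iff:
  assumes "t \<in> {-1<..<1}"
  shows "tilt a t = s \<longleftrightarrow> a = (s - t) / (1 - t\<^sup>2)"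
proof -
  have "1 - t\<^sup>2 > 0" using assms abs_square_less_1[of t] by auto
  then show ?thesis by (auto simp: tilt_def field_simps)
qed

lemma countable_avoid_open_interval:
  fixes B :: "real set"
  assumes "countable B" "a < b"
  obtains x where "x \<in> {a<..<b}" "x \<notin> B"
proof -
  have "\<not> {a<..<b} \<subseteq> B"
    using assms countable_subset[of "{a<..<b}" B] uncountable_open_interval[of a b] by blast
  then show thesis using that by blast
qed

lemma coordinatewise_image_Pi:
  fixes g :: "'i \<Rightarrow> 'a \<Rightarrow> 'a"
  assumes "\<And>n. g n ` S = S"
  shows "(\<lambda>f n. g n (f n)) ` {f. \<forall>n. f n \<in> S} = {f. \<forall>n. f n \<in> S}"
proof
  show "(\<lambda>f n. g n (f n)) ` {f. \<forall>n. f n \<in> S} \<subseteq> {f. \<forall>n. f n \<in> S}"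
    using assms by blast
  show "{f. \<forall>n. f n \<in> S} \<subseteq> (\<lambda>f n. g n (f n)) ` {f. \<forall>n. f n \<in> S}"
  proof
    fix u :: "'i \<Rightarrow> 'a" assume "u \<in> {f. \<forall>n. f n \<in> S}"
    then have "\<forall>n. \<exists>t\<in>S. g n t = u n" using assms by (metis image_iff mem_Collect_eq)
    then obtain f where "\<And>n. f n \<in> S \<and> g n (f n) = u n" by metis
    then have "f \<in> {f. \<forall>n. f n \<in> S}" "u = (\<lambda>n. g n (f n))" by auto
    then show "u \<in> (\<lambda>f n. g n (f n)) ` {f. \<forall>n. f n \<in> S}" by blast
  qed
qed

lemma homeomorphic_map_Qtop_coordinatewise:
  assumes cont: "\<And>n. continuous_on {-1..1} (g n)"
    and inj: "\<And>n. inj_on (g n) {-1..1}"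
    and onto: "\<And>n. g n ` {-1..1} = {-1..1}"
  shows "homeomorphic_map Qtop Qtop (\<lambda>f n. g n (f n))"
proof (rule continuous_imp_homeomorphic_map)
  show "continuous_map Qtop Qtop (\<lambda>f n. g n (f n))"
    unfolding Qtop_def continuous_map_componentwise_UNIV
  proof
    fix k
    have "continuous_map (product_topology (\<lambda>_. top_of_set {-1..1}) UNIV) (top_of_set {-1..1})
            (g k \<circ> (\<lambda>f. f k))"
      using cont onto by (intro continuous_map_compose[OF continuous_map_product_projection]) auto
    then show "continuous_map (product_topology (\<lambda>_. top_of_set {-1..1}) UNIV) (top_of_set {-1..1})
            (\<lambda>f. g k (f k))"
      by (simp add: o_def)
  qed
  show "compact_space Qtop"
    unfolding Qtop_def
    using compact_space_product_topology compact_space_subtopology compactin_euclidean_iff by blast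
  show "Hausdorff_space Qtop"
    unfolding Qtop_def
    using Hausdorff_space_euclidean Hausdorff_space_product_topology Hausdorff_space_subtopology by blast
  show "(\<lambda>f n. g n (f n)) ` topspace Qtop = topspace Qtop"
    using coordinatewise_image_Pi[OF onto] by (simp add: topspace_Qtop Qset_def)
  show "inj_on (\<lambda>f n. g n (f n)) (topspace Qtop)"
    using inj unfolding topspace_Qtop Qset_def inj_on_def fun_eq_iff by blast
qed

lemma K_F_perturb:
  assumes F: "free_filter F" and u: "u \<in> Qset" and v: "v \<in> K_F F"
    and close: "\<And>n. \<bar>u n - v n\<bar> \<le> inverse (2 ^ n)"
  shows "u \<in> K_F F"
proof -
  have filt: "is_filter F" and cofinite: "\<And>A. finite (UNIV - A) \<Longrightarrow> A \<in> F"
    using F by (auto simp: free_filter_def)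
  have "{n. \<bar>u n\<bar> < inverse (2 ^ m)} \<in> F" for m :: nat
  proof -
    let ?V = "{n. \<bar>v n\<bar> < inverse (2 ^ Suc m)}" and ?T = "{n. Suc m \<le> n}"
    have "UNIV - ?T = {..m}" by auto
    then have "?T \<in> F" using cofinite by (metis finite_atMost)
    moreover have "?V \<in> F" using v unfolding K_F_def by blast
    moreover have "?V \<inter> ?T \<subseteq> {n. \<bar>u n\<bar> < inverse (2 ^ m)}"
    proof
      fix n assume n: "n \<in> ?V \<inter> ?T"
      have "inverse ((2::real) ^ n) \<le> inverse (2 ^ Suc m)"
        using n by (intro le_imp_inverse_le power_increasing) auto
      moreover have "\<bar>v n\<bar> < inverse (2 ^ Suc m)" using n by simp
      ultimately have "\<bar>u n\<bar> < inverse (2 ^ Suc m) + inverse (2 ^ Suc m)"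
        using close[of n] by linarith
      then show "n \<in> {n. \<bar>u n\<bar> < inverse (2 ^ m)}" by simp
    qed
    ultimately show ?thesis using filt unfolding is_filter_def by blast
  qed
  then show ?thesis using u by (auto simp: K_F_def)
qed

lemma Qint_subset_Qset: "Qint \<subseteq> Qset"
  by (auto simp: Qint_def Qset_def less_imp_le)

lemma C_F_image_eq:
  assumes F: "free_filter F" and Qint: "h ` Qint = Qint"
    and close: "\<And>f n. f \<in> Qint \<Longrightarrow> \<bar>h f n - f n\<bar> \<le> inverse (2 ^ n)"
  shows "h ` C_F F = C_F F"
proof
  show "h ` C_F F \<subseteq> C_F F"
  proof
    fix g assume "g \<in> h ` C_F F"
    then obtain f where f: "f \<in> K_F F" "f \<in> Qint" and g: "g = h f" by (auto simp: C_F_def)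
    then have "g \<in> Qint" using Qint by blast
    moreover have "g \<in> K_F F"
      using K_F_perturb[OF F _ f(1)] close[OF f(2)] \<open>g \<in> Qint\<close> Qint_subset_Qset g by blast
    ultimately show "g \<in> C_F F" by (simp add: C_F_def)
  qed
  show "C_F F \<subseteq> h ` C_F F"
  proof
    fix g assume "g \<in> C_F F"
    then have g: "g \<in> K_F F" "g \<in> Qint" by (auto simp: C_F_def)
    then obtain f where f: "f \<in> Qint" "g = h f" using Qint by blast
    have "\<bar>f n - g n\<bar> \<le> inverse (2 ^ n)" for n
      using close[OF f(1), of n] f(2) by (simp add: abs_minus_commute)
    then have "f \<in> K_F F"
      using K_F_perturb[OF F _ g(1)] f(1) Qint_subset_Qset by blast
    then show "g \<in> h ` C_F F" using f by (auto simp: C_F_def)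
  qed
qed

theorem mainTheorem13:
  fixes F :: "nat set set" and D E :: "(nat \<Rightarrow> real) set"
  assumes "free_filter F"
    and "countable D" and "D \<subseteq> Qint"
    and "countable E" and "E \<subseteq> Qint"
  shows "\<exists>h. homeomorphic_map Qtop Qtop h \<and> h ` C_F F = C_F F \<and> h ` Qint = Qint \<and>
           (\<forall>d\<in>D. \<forall>e\<in>E. \<forall>n. h d n \<noteq> e n)"
proof -
  define bad where "bad n = (\<lambda>(d, e). (e n - d n) / (1 - (d n)\<^sup>2)) ` (D \<times> E)" for n
  have "countable (bad n)" for n
    unfolding bad_def using assms(2,4) by auto
  then have "\<exists>x. x \<in> {0<..<inverse (2 ^ Suc n)} \<and> x \<notin> bad n" for n
    by (meson countable_avoid_open_interval inverse_positive_iff_positive zero_less_power zero_less_numeral)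
  then obtain a where a: "\<And>n. a n \<in> {0<..<inverse (2 ^ Suc n)} \<and> a n \<notin> bad n"
    by metis
  have small: "\<bar>a n\<bar> \<le> 1/2" "\<bar>a n\<bar> \<le> inverse (2 ^ n)" for n
    using a[of n] le_imp_inverse_le[of 2 "2 ^ Suc n :: real"] by auto
  define h where "h f = (\<lambda>n. tilt (a n) (f n))" for f
  have "inj_on (tilt (a n)) {-1..1}" for n
    using strict_mono_on_imp_inj_on strict_mono_on_tilt small by blast
  then have "homeomorphic_map Qtop Qtop h"
    unfolding h_def
    by (intro homeomorphic_map_Qtop_coordinatewise continuous_on_tilt tilt_image_closed_interval small)
  moreover have Qint: "h ` Qint = Qint"
    unfolding h_def Qint_def by (intro coordinatewise_image_Pi tilt_image_open_interval small)
  moreover have "h ` C_F F = C_F F"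
  proof (rule C_F_image_eq[OF assms(1) Qint])
    fix f n assume "f \<in> Qint"
    then have "\<bar>tilt (a n) (f n) - f n\<bar> \<le> \<bar>a n\<bar>"
      by (intro tilt_dist_le) (auto simp: Qint_def less_imp_le)
    then show "\<bar>h f n - f n\<bar> \<le> inverse (2 ^ n)"
      using small(2)[of n] by (simp add: h_def)
  qed
  moreover have "h d n \<noteq> e n" if "d \<in> D" "e \<in> E" for d e n
  proof
    assume "h d n = e n"
    moreover have "d n \<in> {-1<..<1}" using that assms(3) by (auto simp: Qint_def)
    ultimately have "a n = (e n - d n) / (1 - (d n)\<^sup>2)"
      using tilt_eq_iff by (simp add: h_def)
    then have "a n \<in> bad n" using that by (force simp: bad_def)
    then show False using a by blast
  qed
  ultimately show ?thesis by blast
qed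

end
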